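(* Let $K$, $\mu_0$ and $\beta_c$ be as in the context and let $w:=\sup[\mathrm{supp}(\mu_0)]\in(0,\infty]$. If $\alpha\in(0,\infty)$, then $\beta_c<\infty$ for all such $\mu_0$ with $\mu_0(\{w\})=0$ (in particular whenever $w=\infty$).
   Context: Let $K$ be a probability distribution on $\mathbb N=\{1,2,\dots\}$ such that $\lim_{n\to\infty}\log K(n)/\log n=-(1+\alpha)$ for some $\alpha\in[0,\infty)$. Let $\mu_0$ be a probability measure on $\mathbb R$ with mean $0$, variance $1$, and $M(\lambda):=\int e^{\lambda x}\,d\mu_0(x)<\infty$ for all $\lambda\in\mathbb R$. Let $\omega=(\omega_k)_{k\ge 0}$ be i.i.d. with law $\mu_0$ (law $\mathbb P$, expectation $\mathbb E$). For $\beta\ge 0$, $h\in\mathbb R$ put $Z_n^{\beta,h,\omega}=\sum_{N\ge1}\sum_{0=k_0<k_1<\dots<k_N=n}\prod_{i=1}^N K(k_i-k_{i-1})\,e^{\beta\omega_{k_{i-1}}-h}$. The quenched free energy $f^{\mathrm{que}}(\beta,h)=\lim_{n}\frac1n\log Z_n^{\beta,h,\omega}$ exists $\mathbb P$-a.s., is non-random and $\ge0$; $h_c^{\mathrm{que}}(\beta):=\inf\{h: f^{\mathrm{que}}(\beta,h)=0\}$; $h_c^{\mathrm{ann}}(\beta):=\inf\{h:\lim_n\frac1n\log\mathbb E Z_n^{\beta,h,\omega}=0\}=\log M(\beta)$. $\beta_c:=\sup\{\beta\ge0:h_c^{\mathrm{que}}(\beta)=h_c^{\mathrm{ann}}(\beta)\}\in[0,\infty]$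 (equality holds exactly on $[0,\beta_c]$). *)

theory Defs
  imports "HOL-Probability.Probability"
begin

definition renewal_paths :: "nat \<Rightarrow> nat list set" where
  "renewal_paths n = {ks. length ks \<ge> 2 \<and> sorted_wrt (<) ks \<and> ks ! 0 = 0 \<and> last ks = n}"

definition Zpin :: "(nat \<Rightarrow> real) \<Rightarrow> real \<Rightarrow> real \<Rightarrow> (nat \<Rightarrow> real) \<Rightarrow> nat \<Rightarrow> real" where
  "Zpin K \<beta> h \<omega> n =
     (\<Sum>ks\<in>renewal_paths n. \<Prod>i\<in>{1..<length ks}.
         K (ks ! i - ks ! (i - 1)) * exp (\<beta> * \<omega> (ks ! (i - 1)) - h))"

definition env :: "real measure \<Rightarrow> (nat \<Rightarrow> real) measure" where
  "env \<mu>0 = PiM UNIV (\<lambda>_. \<mu>0)"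

text \<open>Quenched free energy: the (a.s. existing, non-random) limit of (1/n) log Z_n.\<close>
definition f_que :: "(nat \<Rightarrow> real) \<Rightarrow> real measure \<Rightarrow> real \<Rightarrow> real \<Rightarrow> real" where
  "f_que K \<mu>0 \<beta> h =
     (THE F. AE \<omega> in env \<mu>0. (\<lambda>n. ln (Zpin K \<beta> h \<omega> n) / real n) \<longlonglongrightarrow> F)"

definition hc_que :: "(nat \<Rightarrow> real) \<Rightarrow> real measure \<Rightarrow> real \<Rightarrow> real" where
  "hc_que K \<mu>0 \<beta> = Inf {h. f_que K \<mu>0 \<beta> h = 0}"

definition f_ann :: "(nat \<Rightarrow> real) \<Rightarrow> real measure \<Rightarrow> real \<Rightarrow> real \<Rightarrow> real" where
  "f_ann K \<mu>0 \<beta> h =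
     lim (\<lambda>n. ln (\<integral>\<omega>. Zpin K \<beta> h \<omega> n \<partial>env \<mu>0) / real n)"

definition hc_ann :: "(nat \<Rightarrow> real) \<Rightarrow> real measure \<Rightarrow> real \<Rightarrow> real" where
  "hc_ann K \<mu>0 \<beta> = Inf {h. f_ann K \<mu>0 \<beta> h = 0}"

text \<open>The set {beta >= 0 : h_c^que(beta) = h_c^ann(beta)}; beta_c is its supremum,
  so beta_c < infinity iff this set is bounded above.\<close>
definition disorder_irrelevant_set :: "(nat \<Rightarrow> real) \<Rightarrow> real measure \<Rightarrow> real set" where
  "disorder_irrelevant_set K \<mu>0 = {\<beta>. \<beta> \<ge> 0 \<and> hc_que K \<mu>0 \<beta> = hc_ann K \<mu>0 \<beta>}"

definition msupport :: "real measure \<Rightarrow> real set" where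
  "msupport \<mu> = {x. \<forall>e>0. emeasure \<mu> (ball x e) > 0}"

end

theory Submission
  imports Defs
begin

text \<open>
  Fix \<gamma> \<in> (1/(1+\<alpha>), 1), so that S = \<Sum>_n K(n)^\<gamma> is finite. Since (\<Sum> a_i)^\<gamma> \<le> \<Sum> a_i^\<gamma> and the
  environment is i.i.d., the renewal recursion for Z_n gives E[Z_n^\<gamma>] \<le> 1 for every n as soon as
  S e^(-\<gamma>h) M(\<gamma>\<beta>) \<le> 1; Markov's inequality and Borel--Cantelli then make Z_n grow subexponentially,
  so the quenched critical point is at most h_0(\<beta>) = log(S M(\<gamma>\<beta>))/\<gamma>.
  The annealed E Z_n is a renewal sum with constant step weight M(\<beta>) e^(-h). It is supermultiplicative
  in n, so by Fekete's lemma its growth rate is positive once M(\<beta>) e^(-h) K(n) > 1; hence the annealed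
  critical point is at least log(K(n) M(\<beta>)) - 1 whenever K(n) > 0.
  Finally, if \<mu>_0 has no atom at the top of its support, then M(\<gamma>\<beta>)/M(\<beta>)^\<gamma> \<rightarrow> 0 as \<beta> \<rightarrow> \<infinity>,
  so h_0(\<beta>) lies below the annealed critical point for all large \<beta>.
\<close>

section \<open>Renewal sums\<close>

fun renewal_pf :: "(nat \<Rightarrow> real) \<Rightarrow> (nat \<Rightarrow> real) \<Rightarrow> nat \<Rightarrow> real" where
  "renewal_pf K v 0 = 1"
| "renewal_pf K v (Suc n) = (\<Sum>m<Suc n. renewal_pf K v m * K (Suc n - m) * v m)"

declare sum.lessThan_Suc [simp del]

text \<open>Unlike \<open>renewal_paths\<close>, this includes the one-point chain \<open>[0]\<close>, so that the recursion
  of \<open>renewal_pf\<close> also holds at \<open>n = 0\<close>.\<close>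
definition renewal_chains :: "nat \<Rightarrow> nat list set" where
  "renewal_chains n = {ks. ks \<noteq> [] \<and> sorted_wrt (<) ks \<and> ks ! 0 = 0 \<and> last ks = n}"

definition chain_weight :: "(nat \<Rightarrow> real) \<Rightarrow> (nat \<Rightarrow> real) \<Rightarrow> nat list \<Rightarrow> real" where
  "chain_weight K v ks = (\<Prod>i\<in>{1..<length ks}. K (ks ! i - ks ! (i - 1)) * v (ks ! (i - 1)))"

lemma sorted_wrt_less_le_last:
  "sorted_wrt (<) (ks :: nat list) \<Longrightarrow> x \<in> set ks \<Longrightarrow> x \<le> last ks"
proof (induction ks rule: rev_induct)
  case (snoc a ks) then show ?case by (cases "ks = []") (auto simp: sorted_wrt_append)
qed simp

lemma finite_renewal_chains: "finite (renewal_chains n)"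
proof (rule finite_subset)
  show "renewal_chains n \<subseteq> {ks. set ks \<subseteq> {..n} \<and> length ks \<le> Suc n}"
  proof
    fix ks assume ks: "ks \<in> renewal_chains n"
    then have sub: "set ks \<subseteq> {..n}"
      using sorted_wrt_less_le_last by (auto simp: renewal_chains_def)
    have "length ks = card (set ks)"
      using ks by (auto simp: renewal_chains_def strict_sorted_iff distinct_card)
    also have "\<dots> \<le> Suc n" using card_mono[OF _ sub] by simp
    finally show "ks \<in> {ks. set ks \<subseteq> {..n} \<and> length ks \<le> Suc n}" using sub by simp
  qed
qed (rule finite_lists_length_le, simp)

lemma renewal_chains_0: "renewal_chains 0 = {[0]}"
proof -
  have "ks = [0]" if "ks \<in> renewal_chains 0" for ks
  proof (cases ks)
    case (Cons k ks')
    have "k = 0" "\<forall>x\<in>set ks'. k < x" "last ks = 0"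
      using that Cons by (auto simp: renewal_chains_def)
    then show ?thesis using Cons by (cases "ks' = []") (auto, metis last_in_set less_irrefl)
  qed (use that in \<open>simp add: renewal_chains_def\<close>)
  then show ?thesis by (auto simp: renewal_chains_def)
qed

lemma renewal_chains_Suc:
  "renewal_chains (Suc n) = (\<lambda>ks. ks @ [Suc n]) ` (\<Union>m<Suc n. renewal_chains m)"
proof (intro equalityI subsetI)
  fix ks assume ks: "ks \<in> renewal_chains (Suc n)"
  then have ne: "ks \<noteq> []" and sorted: "sorted_wrt (<) ks" and hd: "ks ! 0 = 0"
    and last: "last ks = Suc n" by (auto simp: renewal_chains_def)
  have split: "ks = butlast ks @ [Suc n]" using ne last by (metis append_butlast_last_id)
  have "butlast ks \<noteq> []"
    using split hd by (metis append_Nil nat.distinct(1) nth_Cons_0)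
  moreover have "sorted_wrt (<) (butlast ks)" "last (butlast ks) < Suc n"
    using sorted split calculation by (metis sorted_wrt_append last_in_set list.set_intros(1))+
  moreover have "butlast ks ! 0 = 0"
    using hd calculation(1) by (metis length_greater_0_conv nth_butlast)
  ultimately have "butlast ks \<in> (\<Union>m<Suc n. renewal_chains m)" by (auto simp: renewal_chains_def)
  then show "ks \<in> (\<lambda>ks. ks @ [Suc n]) ` (\<Union>m<Suc n. renewal_chains m)" using split by blast
next
  fix ks assume "ks \<in> (\<lambda>ks. ks @ [Suc n]) ` (\<Union>m<Suc n. renewal_chains m)"
  then obtain m ks' where m: "m < Suc n" and ks': "ks' \<in> renewal_chains m" and ks: "ks = ks' @ [Suc n]"
    by auto
  have "\<forall>x\<in>set ks'. x < Suc n"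
    using ks' m sorted_wrt_less_le_last[of ks'] by (auto simp: renewal_chains_def) (meson le_less_trans)
  then show "ks \<in> renewal_chains (Suc n)"
    using ks' ks by (auto simp: renewal_chains_def sorted_wrt_append nth_append)
qed

lemma chain_weight_snoc:
  assumes "ks \<noteq> []"
  shows "chain_weight K v (ks @ [x]) = chain_weight K v ks * (K (x - last ks) * v (last ks))"
proof -
  have "{1..<length (ks @ [x])} = insert (length ks) {1..<length ks}" using assms by (cases ks) auto
  then have "chain_weight K v (ks @ [x])
      = K (x - (ks @ [x]) ! (length ks - 1)) * v ((ks @ [x]) ! (length ks - 1))
        * (\<Prod>i\<in>{1..<length ks}. K ((ks @ [x]) ! i - (ks @ [x]) ! (i - 1)) * v ((ks @ [x]) ! (i - 1)))"
    unfolding chain_weight_def by simp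
  also have "(\<Prod>i\<in>{1..<length ks}. K ((ks @ [x]) ! i - (ks @ [x]) ! (i - 1)) * v ((ks @ [x]) ! (i - 1)))
      = chain_weight K v ks"
    unfolding chain_weight_def by (intro prod.cong) (auto simp: nth_append)
  also have "(ks @ [x]) ! (length ks - 1) = last ks"
    using assms by (simp add: nth_append last_conv_nth)
  finally show ?thesis by simp
qed

lemma renewal_pf_eq_sum_chains:
  "renewal_pf K v n = (\<Sum>ks\<in>renewal_chains n. chain_weight K v ks)"
proof (induction n rule: less_induct)
  case (less n)
  show ?case
  proof (cases n)
    case 0 then show ?thesis by (simp add: renewal_chains_0 chain_weight_def)
  next
    case (Suc k)
    have "(\<Sum>ks\<in>renewal_chains n. chain_weight K v ks)
        = (\<Sum>ks\<in>(\<Union>m<Suc k. renewal_chains m). chain_weight K v (ks @ [Suc k]))"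
      unfolding Suc renewal_chains_Suc by (subst sum.reindex) (auto intro: inj_onI)
    also have "\<dots> = (\<Sum>m<Suc k. \<Sum>ks\<in>renewal_chains m. chain_weight K v (ks @ [Suc k]))"
      by (rule sum.UNION_disjoint) (simp, simp add: finite_renewal_chains, auto simp: renewal_chains_def)
    also have "\<dots> = (\<Sum>m<Suc k. \<Sum>ks\<in>renewal_chains m. chain_weight K v ks * (K (Suc k - m) * v m))"
      by (intro sum.cong refl, subst chain_weight_snoc) (auto simp: renewal_chains_def)
    also have "\<dots> = renewal_pf K v n"
      using less Suc by (auto simp: sum_distrib_right mult.assoc intro!: sum.cong)
    finally show ?thesis ..
  qed
qed

lemma Zpin_eq_renewal_pf:
  assumes "n \<ge> 1"
  shows "Zpin K \<beta> h \<omega> n = renewal_pf K (\<lambda>m. exp (\<beta> * \<omega> m - h)) n"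
proof -
  have "renewal_paths n = renewal_chains n"
  proof (intro equalityI subsetI)
    fix ks assume ks: "ks \<in> renewal_chains n"
    then have "ks \<noteq> [0]" using assms by (auto simp: renewal_chains_def)
    with ks show "ks \<in> renewal_paths n"
      by (cases ks rule: remdups_adj.cases) (auto simp: renewal_paths_def renewal_chains_def)
  qed (auto simp: renewal_paths_def renewal_chains_def)
  then show ?thesis by (simp add: Zpin_def renewal_pf_eq_sum_chains chain_weight_def)
qed

lemma renewal_pf_nonneg:
  assumes "\<And>n. K n \<ge> 0" and "\<And>m. v m \<ge> 0"
  shows "renewal_pf K v n \<ge> 0"
proof (induction n rule: less_induct)
  case (less n) then show ?case using assms by (cases n) (auto intro!: sum_nonneg)
qed

lemma renewal_pf_ge_first:
  assumes K: "\<And>n. K n \<ge> 0" and v: "\<And>m. v m \<ge> 0" and n: "n \<ge> 1"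
  shows "K n * v 0 \<le> renewal_pf K v n"
proof -
  obtain k where k: "n = Suc k" using n by (cases n) auto
  have "renewal_pf K v n = K n * v 0 + (\<Sum>m\<in>{..<Suc k} - {0}. renewal_pf K v m * K (Suc k - m) * v m)"
    unfolding k by (subst renewal_pf.simps, subst sum.remove[of _ 0]) auto
  also have "\<dots> \<ge> K n * v 0"
    using renewal_pf_nonneg[OF K v] K v by (auto intro!: sum_nonneg)
  finally show ?thesis .
qed

lemma renewal_pf_cong:
  assumes "\<And>m. m < n \<Longrightarrow> v m = w m"
  shows "renewal_pf K v n = renewal_pf K w n"
  using assms
proof (induction n rule: less_induct)
  case (less n) then show ?case by (cases n) (auto intro!: sum.cong)
qed

lemma sum_reflect_le_suminf:
  fixes f :: "nat \<Rightarrow> real"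
  assumes "\<And>n. f n \<ge> 0" and "summable f"
  shows "(\<Sum>m<N. f (N - m)) \<le> suminf f"
proof -
  have "(\<Sum>m<N. f (N - m)) = (\<Sum>i<N. f (Suc i))"
    using sum.nat_diff_reindex[of "\<lambda>i. f (Suc i)" N] by (simp add: Suc_diff_Suc)
  also have "\<dots> \<le> (\<Sum>i<Suc N. f i)" unfolding sum.lessThan_Suc_shift using assms(1)[of 0] by simp
  also have "\<dots> \<le> suminf f" using assms by (intro sum_le_suminf) auto
  finally show ?thesis .
qed

lemma renewal_pf_const_le:
  assumes K: "\<And>n. K n \<ge> 0" "summable K" "suminf K \<le> 1" and x: "x \<ge> 0"
  shows "renewal_pf K (\<lambda>_. x) n \<le> max 1 x ^ n"
proof (induction n rule: less_induct)
  case (less n)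
  show ?case
  proof (cases n)
    case (Suc k)
    have "renewal_pf K (\<lambda>_. x) n \<le> (\<Sum>m<Suc k. max 1 x ^ k * K (Suc k - m) * max 1 x)"
      unfolding Suc renewal_pf.simps
    proof (intro sum_mono mult_mono)
      fix m assume "m \<in> {..<Suc k}"
      then show "renewal_pf K (\<lambda>_. x) m \<le> max 1 x ^ k"
        using less Suc order_trans[OF _ power_increasing[of m k "max 1 x"]] by auto
    qed (use K x renewal_pf_nonneg[OF K(1)] in auto)
    also have "\<dots> = max 1 x ^ Suc k * (\<Sum>m<Suc k. K (Suc k - m))"
      by (simp add: sum_distrib_left algebra_simps)
    also have "\<dots> \<le> max 1 x ^ Suc k"
      using sum_reflect_le_suminf[OF K(1,2), of "Suc k"] K(3)
      by (intro mult_right_le_one_le) (auto intro: sum_nonneg K)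
    finally show ?thesis using Suc by simp
  qed simp
qed

lemma renewal_pf_const_supermult:
  assumes K: "\<And>n. K n \<ge> 0" and x: "x \<ge> 0"
  shows "renewal_pf K (\<lambda>_. x) n * renewal_pf K (\<lambda>_. x) m \<le> renewal_pf K (\<lambda>_. x) (n + m)"
proof (induction m rule: less_induct)
  case (less m)
  let ?R = "renewal_pf K (\<lambda>_. x)"
  show ?case
  proof (cases m)
    case (Suc k)
    have "?R n * ?R m = (\<Sum>i<Suc k. ?R n * ?R i * K (Suc k - i) * x)"
      unfolding Suc renewal_pf.simps by (simp add: sum_distrib_left mult.assoc)
    also have "\<dots> \<le> (\<Sum>i<Suc k. ?R (n + i) * K (Suc (n + k) - (n + i)) * x)"
      using less Suc K x by (intro sum_mono mult_right_mono) (auto simp: mult_right_mono)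
    also have "\<dots> = (\<Sum>j\<in>(+) n ` {..<Suc k}. ?R j * K (Suc (n + k) - j) * x)"
      by (subst sum.reindex) auto
    also have "\<dots> \<le> (\<Sum>j<Suc (n + k). ?R j * K (Suc (n + k) - j) * x)"
      using renewal_pf_nonneg[OF K] K x by (intro sum_mono2) auto
    finally show ?thesis using Suc by simp
  qed simp
qed

lemma renewal_pf_const_power:
  assumes K: "\<And>n. K n \<ge> 0" and x: "x \<ge> 0"
  shows "renewal_pf K (\<lambda>_. x) n ^ k \<le> renewal_pf K (\<lambda>_. x) (k * n)"
proof (induction k)
  case (Suc k)
  have "renewal_pf K (\<lambda>_. x) n ^ Suc k \<le> renewal_pf K (\<lambda>_. x) n * renewal_pf K (\<lambda>_. x) (k * n)"
    using Suc renewal_pf_nonneg[OF K] x by (auto intro: mult_left_mono)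
  also have "\<dots> \<le> renewal_pf K (\<lambda>_. x) (n + k * n)"
    by (rule renewal_pf_const_supermult[OF K x])
  finally show ?case by simp
qed simp

lemma renewal_pf_measurable [measurable]:
  assumes "\<And>m. m < n \<Longrightarrow> (\<lambda>\<omega>. v \<omega> m) \<in> borel_measurable N"
  shows "(\<lambda>\<omega>. renewal_pf K (v \<omega>) n) \<in> borel_measurable N"
  using assms
proof (induction n rule: less_induct)
  case (less n) then show ?case by (cases n) auto
qed

section \<open>Fekete's lemma and exponential growth rates\<close>

lemma superadditive_iterate:
  fixes a :: "nat \<Rightarrow> real"
  assumes sup: "\<And>n m. n \<ge> N \<Longrightarrow> m \<ge> N \<Longrightarrow> a n + a m \<le> a (n + m)"
    and "m \<ge> N" and "r \<ge> N"
  shows "real q * a m + a r \<le> a (q * m + r)"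
proof (induction q)
  case (Suc q)
  have "real (Suc q) * a m + a r \<le> a (q * m + r) + a m" using Suc by (simp add: algebra_simps)
  also have "\<dots> \<le> a ((q * m + r) + m)" using sup assms(2,3) by simp
  finally show ?case by (simp add: algebra_simps)
qed simp

lemma superadditive_linear_lower_bound:
  fixes a :: "nat \<Rightarrow> real"
  assumes sup: "\<And>n m. n \<ge> N \<Longrightarrow> m \<ge> N \<Longrightarrow> a n + a m \<le> a (n + m)"
    and m: "m \<ge> N" "m \<ge> 1"
  shows "\<exists>D. \<forall>n\<ge>N + m. real n * (a m / real m) - D \<le> a n"
proof -
  define c where "c = Min (a ` {N..<N + m})"
  define D where "D = real (N + m) * \<bar>a m / real m\<bar> + \<bar>c\<bar>"
  have "real n * (a m / real m) - D \<le> a n" if n: "n \<ge> N + m" for n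
  proof -
    define q r where "q = (n - N) div m" and "r = N + (n - N) mod m"
    have n_eq: "n = q * m + r" and r: "N \<le> r" "r < N + m"
      unfolding q_def r_def using n m by auto
    have "real r * (a m / real m) \<le> real r * \<bar>a m / real m\<bar>" by (intro mult_left_mono abs_ge_self) auto
    also have "\<dots> \<le> real (N + m) * \<bar>a m / real m\<bar>" using r by (intro mult_right_mono) auto
    finally have "real r * (a m / real m) \<le> real (N + m) * \<bar>a m / real m\<bar>" .
    moreover have "c \<le> a r" unfolding c_def using r by (intro Min_le) auto
    moreover have "real n * (a m / real m) = real q * a m + real r * (a m / real m)"
      using m by (simp add: n_eq field_simps)
    ultimately have "real n * (a m / real m) - D \<le> real q * a m + a r"
      unfolding D_def by linarith
    also have "\<dots> \<le> a n" unfolding n_eq by (rule superadditive_iterate[OF sup m(1) r(1)])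
    finally show ?thesis .
  qed
  then show ?thesis by blast
qed

lemma fekete_superadditive:
  fixes a :: "nat \<Rightarrow> real"
  assumes sup: "\<And>n m. n \<ge> N \<Longrightarrow> m \<ge> N \<Longrightarrow> a n + a m \<le> a (n + m)"
    and N: "N \<ge> 1" and bound: "\<And>n. n \<ge> N \<Longrightarrow> a n \<le> C * real n"
  shows "(\<lambda>n. a n / real n) \<longlonglongrightarrow> (SUP n\<in>{N..}. a n / real n)"
proof (rule LIMSEQ_I)
  let ?L = "SUP n\<in>{N..}. a n / real n"
  have bdd: "bdd_above ((\<lambda>n. a n / real n) ` {N..})"
    using bound N by (intro bdd_aboveI2[of _ _ C]) (auto simp: pos_divide_le_eq)
  fix e :: real assume e: "e > 0"
  obtain m where m: "m \<ge> N" and am: "?L - e / 2 < a m / real m"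
    using less_cSupD[of "(\<lambda>n. a n / real n) ` {N..}" "?L - e / 2"] e by auto
  obtain D where D: "\<And>n. n \<ge> N + m \<Longrightarrow> real n * (a m / real m) - D \<le> a n"
    using superadditive_linear_lower_bound[OF sup m] m N by auto
  obtain n0 :: nat where n0: "real n0 > 2 * \<bar>D\<bar> / e" using reals_Archimedean2 by blast
  have "norm (a n / real n - ?L) < e" if n: "n \<ge> max (N + m) (Suc n0)" for n
  proof -
    have pos: "real n > 0" using n by simp
    have "(real n * (a m / real m) - D) / real n \<le> a n / real n"
      using D[of n] n by (intro divide_right_mono) auto
    then have lower: "a m / real m - D / real n \<le> a n / real n"
      using pos by (simp add: diff_divide_distrib)
    have "real n0 < real n" using n by simp
    then have "2 * \<bar>D\<bar> / e < real n" using n0 by linarith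
    then have "D < e / 2 * real n" using e abs_ge_self[of D] by (simp add: divide_less_eq mult.commute)
    then have "D / real n < e / 2" using pos by (simp add: divide_less_eq)
    moreover have "a n / real n \<le> ?L" using bdd n by (intro cSup_upper) auto
    ultimately show ?thesis using am lower e by (auto simp: abs_less_iff)
  qed
  then show "\<exists>no. \<forall>n\<ge>no. norm (a n / real n - ?L) < e" by blast
qed

lemma ln_over_n_tendsto_0_of_tail:
  fixes K :: "nat \<Rightarrow> real"
  assumes tail: "(\<lambda>n. ln (K n) / ln (real n)) \<longlonglongrightarrow> c"
  shows "(\<lambda>n. ln (K n) / real n) \<longlonglongrightarrow> 0"
proof -
  have "(\<lambda>n. ln (K n) / ln (real n) * (ln (real n) / real n)) \<longlonglongrightarrow> c * 0"
    by (intro tendsto_mult tail lim_ln_over_n)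
  moreover have "\<forall>\<^sub>F n in sequentially. ln (K n) / ln (real n) * (ln (real n) / real n) = ln (K n) / real n"
    using eventually_ge_at_top[of "2::nat"] by eventually_elim simp
  ultimately show ?thesis using Lim_transform_eventually by force
qed

lemma eventually_pos_of_tail:
  fixes K :: "nat \<Rightarrow> real"
  assumes "\<And>n. K n \<ge> 0" and "(\<lambda>n. ln (K n) / ln (real n)) \<longlonglongrightarrow> c" and "c < 0"
  shows "\<forall>\<^sub>F n in sequentially. K n > 0"
  using order_tendstoD(2)[OF assms(2,3)]
proof eventually_elim
  case (elim n)
  then have "K n \<noteq> 0" by auto
  then show ?case using assms(1)[of n] by linarith
qed

lemma ln_over_n_tendsto_0_squeeze:
  fixes X u :: "nat \<Rightarrow> real"
  assumes lower: "(\<lambda>n. ln (u n) / real n) \<longlonglongrightarrow> 0" "\<forall>\<^sub>F n in sequentially. 0 < u n \<and> u n \<le> X n"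
    and upper: "\<And>\<delta>. \<delta> > 0 \<Longrightarrow> \<forall>\<^sub>F n in sequentially. X n < exp (\<delta> * real n)"
  shows "(\<lambda>n. ln (X n) / real n) \<longlonglongrightarrow> 0"
proof (rule order_tendstoI)
  fix e :: real assume "e < 0"
  show "\<forall>\<^sub>F n in sequentially. e < ln (X n) / real n"
    using lower(2) order_tendstoD(1)[OF lower(1) \<open>e < 0\<close>]
  proof eventually_elim
    case (elim n)
    then have "ln (u n) / real n \<le> ln (X n) / real n" by (intro divide_right_mono) auto
    with elim show ?case by linarith
  qed
next
  fix e :: real assume e: "e > 0"
  show "\<forall>\<^sub>F n in sequentially. ln (X n) / real n < e"
    using upper[OF e] lower(2) eventually_gt_at_top[of 0]
  proof eventually_elim
    case (elim n)
    then have "ln (X n) < ln (exp (e * real n))" by (intro ln_less_cancel_iff[THEN iffD2]) auto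
    then show ?case using elim by (simp add: divide_less_eq)
  qed
qed

lemma ln_mult_over_n_tendsto_0:
  fixes K :: "nat \<Rightarrow> real"
  assumes "c > 0" and "\<forall>\<^sub>F n in sequentially. K n > 0" and "(\<lambda>n. ln (K n) / real n) \<longlonglongrightarrow> 0"
  shows "(\<lambda>n. ln (c * K n) / real n) \<longlonglongrightarrow> 0"
proof -
  have "(\<lambda>n. ln c / real n + ln (K n) / real n) \<longlonglongrightarrow> 0 + 0"
    by (intro tendsto_add tendsto_divide_0[OF tendsto_const] assms(3) filterlim_real_sequentially
        filterlim_at_top_imp_at_infinity)
  moreover have "\<forall>\<^sub>F n in sequentially. ln c / real n + ln (K n) / real n = ln (c * K n) / real n"
    using assms(2) by eventually_elim (use assms(1) in \<open>simp add: ln_mult add_divide_distrib\<close>)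
  ultimately show ?thesis using Lim_transform_eventually by force
qed

context
  fixes K :: "nat \<Rightarrow> real"
  assumes K_nonneg: "\<And>n. K n \<ge> 0" and K_summable: "summable K" and K_suminf: "suminf K \<le> 1"
    and K_pos: "\<forall>\<^sub>F n in sequentially. K n > 0"
begin

lemma renewal_pf_const_eventually_pos:
  assumes "x > 0"
  shows "\<forall>\<^sub>F n in sequentially. renewal_pf K (\<lambda>_. x) n > 0"
  using K_pos eventually_ge_at_top[of 1]
proof eventually_elim
  case (elim n)
  then have "0 < K n * x" using assms by simp
  also have "\<dots> \<le> renewal_pf K (\<lambda>_. x) n"
    using renewal_pf_ge_first[of K "\<lambda>_. x" n] K_nonneg elim assms by simp
  finally show ?case .
qed

lemma renewal_pf_const_rate_zero:
  assumes lnK: "(\<lambda>n. ln (K n) / real n) \<longlonglongrightarrow> 0" and x: "0 < x" "x \<le> 1"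
  shows "(\<lambda>n. ln (renewal_pf K (\<lambda>_. x) n) / real n) \<longlonglongrightarrow> 0"
proof (rule ln_over_n_tendsto_0_squeeze)
  show "(\<lambda>n. ln (x * K n) / real n) \<longlonglongrightarrow> 0" by (rule ln_mult_over_n_tendsto_0[OF x(1) K_pos lnK])
  show "\<forall>\<^sub>F n in sequentially. 0 < x * K n \<and> x * K n \<le> renewal_pf K (\<lambda>_. x) n"
    using K_pos eventually_ge_at_top[of 1]
    by eventually_elim (use x renewal_pf_ge_first[of K "\<lambda>_. x"] K_nonneg in \<open>auto simp: mult.commute\<close>)
  fix \<delta> :: real assume "\<delta> > 0"
  show "\<forall>\<^sub>F n in sequentially. renewal_pf K (\<lambda>_. x) n < exp (\<delta> * real n)"
    using eventually_ge_at_top[of 1]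
  proof eventually_elim
    case (elim n)
    have "renewal_pf K (\<lambda>_. x) n \<le> 1"
      using renewal_pf_const_le[OF K_nonneg K_summable K_suminf, of x n] x by simp
    also have "1 < exp (\<delta> * real n)" using \<open>\<delta> > 0\<close> elim by simp
    finally show ?case .
  qed
qed

lemma renewal_pf_const_rate_pos:
  assumes n1: "n1 \<ge> 1" "x * K n1 > 1"
  shows "\<exists>L>0. (\<lambda>n. ln (renewal_pf K (\<lambda>_. x) n) / real n) \<longlonglongrightarrow> L"
proof -
  let ?R = "renewal_pf K (\<lambda>_. x)"
  have "K n1 \<le> 1"
    using sum_le_suminf[OF K_summable, of "{n1}"] K_nonneg K_suminf by simp
  then have "x * K n1 \<le> max 1 x * 1"
    using K_nonneg[of n1] by (intro mult_mono) auto
  then have x: "x \<ge> 1" using n1(2) by linarith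
  obtain N where "\<And>n. n \<ge> N \<Longrightarrow> ?R n > 0 \<and> n \<ge> 1"
    using eventually_conj[OF renewal_pf_const_eventually_pos eventually_ge_at_top[of 1], of x] x
    unfolding eventually_sequentially by auto
  then have N: "N \<ge> 1" and R_pos: "\<And>n. n \<ge> N \<Longrightarrow> ?R n > 0" by auto
  define a where "a n = ln (?R n)" for n
  have sup: "a n + a m \<le> a (n + m)" if "n \<ge> N" "m \<ge> N" for n m
  proof -
    have "?R n * ?R m \<le> ?R (n + m)" using renewal_pf_const_supermult[of K x n m] K_nonneg x by simp
    then have "ln (?R n * ?R m) \<le> a (n + m)" unfolding a_def
      using R_pos[OF that(1)] R_pos[OF that(2)] by (intro ln_mono) auto
    then show ?thesis unfolding a_def using R_pos[OF that(1)] R_pos[OF that(2)] by (simp add: ln_mult)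
  qed
  have bound: "a n \<le> ln x * real n" if "n \<ge> N" for n
  proof -
    have "?R n \<le> x ^ n" using renewal_pf_const_le[OF K_nonneg K_summable K_suminf, of x n] x by simp
    then have "a n \<le> ln (x ^ n)" unfolding a_def using R_pos[OF that] by simp
    then show ?thesis using x by (simp add: ln_realpow mult.commute)
  qed
  have lim: "(\<lambda>n. a n / real n) \<longlonglongrightarrow> (SUP n\<in>{N..}. a n / real n)"
    by (rule fekete_superadditive[OF sup N bound])
  have bdd: "bdd_above ((\<lambda>n. a n / real n) ` {N..})"
    using bound N by (intro bdd_aboveI2[of _ _ "ln x"]) (auto simp: pos_divide_le_eq)
  have "1 < ?R n1" using renewal_pf_ge_first[of K "\<lambda>_. x" n1] K_nonneg x n1 by (simp add: mult.commute)
  then have "1 < ?R n1 ^ N" using N by (simp add: one_less_power)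
  also have "\<dots> \<le> ?R (N * n1)" using renewal_pf_const_power[of K x n1 N] K_nonneg x by simp
  finally have "0 < a (N * n1) / real (N * n1)" unfolding a_def using N n1(1) by simp
  also have "\<dots> \<le> (SUP n\<in>{N..}. a n / real n)"
    using n1(1) by (intro cSup_upper[OF imageI bdd]) simp
  finally show ?thesis using lim unfolding a_def by blast
qed

end

section \<open>Fractional powers and a Borel--Cantelli bound\<close>

lemma powr_le_linear_plus_const:
  fixes z \<eta> \<gamma> :: real
  assumes \<gamma>: "0 < \<gamma>" "\<gamma> < 1" and \<eta>: "\<eta> > 0" and z: "z \<ge> 0"
  shows "z powr \<gamma> \<le> \<eta> * z + \<eta> powr (- \<gamma> / (1 - \<gamma>))"
proof -
  define z0 where "z0 = \<eta> powr (- 1 / (1 - \<gamma>))"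
  have z0: "z0 > 0" unfolding z0_def using \<eta> by simp
  show ?thesis
  proof (cases "z \<le> z0")
    case True
    have "z powr \<gamma> \<le> z0 powr \<gamma>" using True z \<gamma> by (intro powr_mono2) auto
    also have "\<dots> = \<eta> powr (- \<gamma> / (1 - \<gamma>))" unfolding z0_def using \<eta> by (simp add: powr_powr)
    finally show ?thesis using \<eta> z by (simp add: add_increasing)
  next
    case False
    have "z powr \<gamma> = z powr (\<gamma> - 1) * z" using False z0 powr_add[of z "\<gamma> - 1" 1] by simp
    also have "z powr (\<gamma> - 1) \<le> z0 powr (\<gamma> - 1)" using False z0 \<gamma> by (intro powr_mono2') auto
    also have "z0 powr (\<gamma> - 1) = \<eta>"
    proof -
      have "- 1 / (1 - \<gamma>) * (\<gamma> - 1) = 1" using \<gamma> by (simp add: field_simps)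
      then show ?thesis unfolding z0_def using \<eta> by (simp add: powr_powr)
    qed
    finally show ?thesis using z by (simp add: mult_right_mono add_increasing2)
  qed
qed

lemma powr_le_1_plus:
  fixes z \<gamma> :: real
  assumes "z \<ge> 0" "0 < \<gamma>" "\<gamma> \<le> 1"
  shows "z powr \<gamma> \<le> 1 + z"
proof (cases "z \<le> 1")
  case True then show ?thesis using assms powr_le1[of \<gamma> z] by simp
next
  case False then show ?thesis using assms powr_mono[of \<gamma> 1 z] by simp
qed

lemma (in finite_measure) integrable_powr_of_nonneg:
  fixes g :: "'a \<Rightarrow> real"
  assumes "integrable M g" "\<And>x. g x \<ge> 0" "0 < \<gamma>" "\<gamma> \<le> 1"
  shows "integrable M (\<lambda>x. g x powr \<gamma>)"
proof (rule Bochner_Integration.integrable_bound)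
  show "integrable M (\<lambda>x. 1 + g x)" using assms(1) by simp
  show "AE x in M. norm (g x powr \<gamma>) \<le> norm (1 + g x)"
    using powr_le_1_plus[OF assms(2) assms(3,4)] assms(2) by (simp add: add_nonneg_nonneg)
qed (use assms(1) in measurable)

lemma powr_add_le:
  fixes a b \<gamma> :: real
  assumes \<gamma>: "0 < \<gamma>" "\<gamma> \<le> 1" and ab: "a \<ge> 0" "b \<ge> 0"
  shows "(a + b) powr \<gamma> \<le> a powr \<gamma> + b powr \<gamma>"
proof (cases "a + b = 0")
  case False
  define s where "s = a + b"
  have s: "s > 0" using False ab unfolding s_def by simp
  have frac: "x / s \<le> (x / s) powr \<gamma>" if "0 \<le> x" "x \<le> s" for x
  proof -
    have "(x / s) powr 1 \<le> (x / s) powr \<gamma>" using \<gamma> that s by (intro powr_mono') auto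
    then show ?thesis using that s by simp
  qed
  have "s powr \<gamma> = s powr \<gamma> * (a / s + b / s)" using s unfolding s_def by (simp add: add_divide_distrib[symmetric])
  also have "\<dots> \<le> s powr \<gamma> * ((a / s) powr \<gamma> + (b / s) powr \<gamma>)"
    using frac[of a] frac[of b] ab unfolding s_def by (intro mult_left_mono add_mono) auto
  also have "\<dots> = a powr \<gamma> + b powr \<gamma>" using ab s by (simp add: powr_divide distrib_left)
  finally show ?thesis unfolding s_def .
qed (use ab in simp)

lemma powr_sum_le_sum_powr:
  fixes f :: "'a \<Rightarrow> real"
  assumes "0 < \<gamma>" "\<gamma> \<le> 1" and "\<And>i. i \<in> A \<Longrightarrow> f i \<ge> 0"
  shows "(\<Sum>i\<in>A. f i) powr \<gamma> \<le> (\<Sum>i\<in>A. f i powr \<gamma>)"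
  using assms(3)
proof (induction A rule: infinite_finite_induct)
  case (insert x A)
  have "(\<Sum>i\<in>insert x A. f i) powr \<gamma> \<le> f x powr \<gamma> + (\<Sum>i\<in>A. f i) powr \<gamma>"
    using insert assms(1,2) by (simp add: powr_add_le sum_nonneg)
  also have "\<dots> \<le> (\<Sum>i\<in>insert x A. f i powr \<gamma>)" using insert by simp
  finally show ?case .
qed simp_all

lemma (in prob_space) AE_eventually_less_exp_of_frac_moment:
  fixes X :: "nat \<Rightarrow> 'a \<Rightarrow> real"
  assumes meas: "\<And>n. X n \<in> borel_measurable M" and \<gamma>: "\<gamma> > 0"
    and moment: "\<And>n. integrable M (\<lambda>x. X n x powr \<gamma>)" "\<And>n. (\<integral>x. X n x powr \<gamma> \<partial>M) \<le> 1"
    and \<delta>: "\<delta> > 0"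
  shows "AE x in M. \<forall>\<^sub>F n in sequentially. X n x < exp (\<delta> * real n)"
proof -
  define A where "A n = {x \<in> space M. exp (\<gamma> * \<delta> * real n) \<le> X n x powr \<gamma>}" for n
  have A: "A n \<in> sets M" for n unfolding A_def using meas by measurable
  have "measure M (A n) \<le> exp (- (\<gamma> * \<delta>)) ^ n" for n
  proof -
    have "measure M (A n) \<le> (\<integral>x. X n x powr \<gamma> \<partial>M) / exp (\<gamma> * \<delta> * real n)"
      unfolding A_def using moment(1) by (intro integral_Markov_inequality_measure[where A="space M"]) auto
    also have "\<dots> \<le> exp (- (\<gamma> * \<delta>)) ^ n"
      using moment(2)[of n] by (simp add: divide_right_mono exp_minus exp_of_nat_mult[symmetric]
          power_inverse[symmetric] mult_ac field_simps)
    finally show ?thesis .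
  qed
  then have "summable (\<lambda>n. measure M (A n))"
    using \<gamma> \<delta> by (intro summable_comparison_test'[OF summable_geometric, of "exp (- (\<gamma> * \<delta>))"]) auto
  then have "AE x in M. \<forall>\<^sub>F n in sequentially. x \<in> space M - A n"
    by (intro borel_cantelli_AE1[OF A]) (simp_all add: less_top[symmetric])
  then show ?thesis
  proof (rule AE_mp[OF _ AE_I2], intro impI)
    fix x assume "\<forall>\<^sub>F n in sequentially. x \<in> space M - A n"
    then show "\<forall>\<^sub>F n in sequentially. X n x < exp (\<delta> * real n)"
    proof eventually_elim
      case (elim n)
      then have "X n x powr \<gamma> < exp (\<gamma> * \<delta> * real n)" by (auto simp: A_def)
      moreover have "exp (\<delta> * real n) powr \<gamma> = exp (\<gamma> * \<delta> * real n)" by (simp add: powr_def mult_ac)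
      ultimately have less: "X n x powr \<gamma> < exp (\<delta> * real n) powr \<gamma>" by simp
      show ?case
      proof (rule ccontr)
        assume "\<not> X n x < exp (\<delta> * real n)"
        then have "exp (\<delta> * real n) powr \<gamma> \<le> X n x powr \<gamma>" using \<gamma> by (intro powr_mono2) auto
        then show False using less by simp
      qed
    qed
  qed
qed

lemma (in prob_space) AE_subexponential_of_frac_moment:
  fixes X :: "nat \<Rightarrow> 'a \<Rightarrow> real"
  assumes meas: "\<And>n. X n \<in> borel_measurable M" and \<gamma>: "\<gamma> > 0"
    and moment: "\<And>n. integrable M (\<lambda>x. X n x powr \<gamma>)" "\<And>n. (\<integral>x. X n x powr \<gamma> \<partial>M) \<le> 1"
  shows "AE x in M. \<forall>\<delta>>0. \<forall>\<^sub>F n in sequentially. X n x < exp (\<delta> * real n)"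
proof -
  have "AE x in M. \<forall>\<^sub>F n in sequentially. X n x < exp (1 / Suc k * real n)" for k :: nat
    by (rule AE_eventually_less_exp_of_frac_moment[OF meas \<gamma> moment]) simp
  then have "AE x in M. \<forall>k::nat. \<forall>\<^sub>F n in sequentially. X n x < exp (1 / Suc k * real n)"
    unfolding AE_all_countable ..
  then show ?thesis
  proof eventually_elim
    case (elim x)
    show ?case
    proof (intro allI impI)
      fix \<delta> :: real assume "\<delta> > 0"
      then obtain k :: nat where "1 / Suc k < \<delta>" using nat_approx_posE by blast
      then have "exp (1 / Suc k * real n) \<le> exp (\<delta> * real n)" for n
        by (intro exp_mono mult_right_mono) auto
      with elim[rule_format, of k] show "\<forall>\<^sub>F n in sequentially. X n x < exp (\<delta> * real n)"
        by (elim eventually_mono) (rule less_le_trans)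
    qed
  qed
qed

lemma summable_powr_of_tail:
  fixes K :: "nat \<Rightarrow> real"
  assumes K: "\<And>n. K n \<ge> 0" and tail: "(\<lambda>n. ln (K n) / ln (real n)) \<longlonglongrightarrow> - s"
    and \<gamma>: "\<gamma> > 0" "\<gamma> * s > 1"
  shows "summable (\<lambda>n. K n powr \<gamma>)"
proof (rule summable_comparison_test_ev)
  define e where "e = - s + (\<gamma> * s - 1) / (2 * \<gamma>)"
  have e: "- s < e" "e * \<gamma> < -1" unfolding e_def using \<gamma> by (auto simp: field_simps)
  show "summable (\<lambda>n. real n powr (e * \<gamma>))" using e(2) by (simp add: summable_real_powr_iff)
  show "\<forall>\<^sub>F n in sequentially. norm (K n powr \<gamma>) \<le> real n powr (e * \<gamma>)"
    using order_tendstoD(2)[OF tail e(1)] eventually_ge_at_top[of 2]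
  proof eventually_elim
    case (elim n)
    show ?case
    proof (cases "K n = 0")
      case False
      then have Kn: "K n > 0" using K[of n] by simp
      have "ln (K n) < e * ln (real n)" using elim by (simp add: divide_less_eq)
      then have "exp (ln (K n)) < exp (e * ln (real n))" by simp
      then have "K n < real n powr e" using Kn elim by (simp add: powr_def)
      then have "K n powr \<gamma> \<le> (real n powr e) powr \<gamma>" using Kn \<gamma> by (intro powr_mono2) auto
      then show ?thesis using Kn by (simp add: powr_powr)
    qed simp
  qed
qed

section \<open>The single-site law\<close>

locale disorder_law = real_distribution M for M :: "real measure" +
  assumes integrable_exp: "\<And>t. integrable M (\<lambda>x. exp (t * x))"
    and mean_zero: "(\<integral>x. x \<partial>M) = 0"
    and second_moment: "(\<integral>x. x\<^sup>2 \<partial>M) = 1"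
begin

definition mgf :: "real \<Rightarrow> real" where
  "mgf t = (\<integral>x. exp (t * x) \<partial>M)"

lemma integrable_ident: "integrable M (\<lambda>x. x)"
proof (rule Bochner_Integration.integrable_bound)
  show "integrable M (\<lambda>x. exp (1 * x) + exp ((-1) * x))"
    by (intro Bochner_Integration.integrable_add integrable_exp)
  show "AE x in M. norm x \<le> norm (exp (1 * x) + exp ((-1) * x))"
  proof (intro AE_I2)
    fix x :: real
    have "\<bar>x\<bar> \<le> exp \<bar>x\<bar>" using exp_ge_add_one_self[of "\<bar>x\<bar>"] by linarith
    also have "\<dots> \<le> exp x + exp (- x)" by (cases "x \<ge> 0") auto
    finally show "norm x \<le> norm (exp (1 * x) + exp ((-1) * x))" by simp
  qed
qed simp

lemma mgf_ge_1: "mgf t \<ge> 1"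
proof -
  have "(\<integral>x. 1 + t * x \<partial>M) \<le> mgf t" unfolding mgf_def
    using integrable_ident integrable_exp by (intro integral_mono) (auto simp: exp_ge_add_one_self)
  moreover have "(\<integral>x. 1 + t * x \<partial>M) = 1" using integrable_ident mean_zero prob_space by simp
  ultimately show ?thesis by simp
qed

lemma mgf_pos: "mgf t > 0"
  using mgf_ge_1[of t] by simp

lemma measure_greaterThan: "measure M {a<..} = 1 - cdf M a"
  using prob_compl[of "{..a}"] by (simp add: cdf_def Compl_eq_Diff_UNIV[symmetric] not_le)

lemma exp_mult_tail_le_mgf:
  assumes "t \<ge> 0"
  shows "exp (t * a) * measure M {a<..} \<le> mgf t"
proof -
  have "(\<integral>x. exp (t * a) * indicator {a<..} x \<partial>M) \<le> mgf t" unfolding mgf_def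
  proof (intro integral_mono)
    show "integrable M (\<lambda>x. exp (t * a) * indicator {a<..} x :: real)"
      by (intro integrable_mult_right integrable_real_indicator) (auto simp: less_top[symmetric])
    show "exp (t * a) * indicator {a<..} x \<le> exp (t * x)" for x
      using assms by (auto simp: indicator_def mult_left_mono)
  qed (use integrable_exp in auto)
  then show ?thesis by simp
qed

lemma tail_pos_right:
  assumes "measure M {a<..} > 0"
  shows "\<exists>a'>a. measure M {a'<..} > 0"
proof -
  have "((\<lambda>x. 1 - cdf M x) \<longlongrightarrow> 1 - cdf M a) (at_right a)"
    using cdf_is_right_cont[of a] by (intro tendsto_diff tendsto_const) (simp add: continuous_within)
  then have "\<forall>\<^sub>F x in at_right a. 0 < 1 - cdf M x"
    using assms by (intro order_tendstoD(1)) (auto simp: measure_greaterThan)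
  then obtain b where "b > a" "\<And>y. a < y \<Longrightarrow> y < b \<Longrightarrow> 0 < 1 - cdf M y"
    unfolding eventually_at_right_field by blast
  then show ?thesis by (intro exI[of _ "(a + b) / 2"]) (auto simp: measure_greaterThan)
qed

lemma tail_0_pos: "measure M {0<..} > 0"
proof (rule ccontr)
  assume "\<not> measure M {0<..} > 0"
  then have "{0<..} \<in> null_sets M"
    by (simp add: null_sets_def emeasure_eq_measure measure_nonneg antisym)
  then have "AE x in M. 0 \<le> - x" by (rule AE_not_in[THEN AE_mp]) auto
  then have "AE x in M. - x = 0"
    using integral_nonneg_eq_0_iff_AE[OF integrable_minus[OF integrable_ident]] mean_zero by simp
  then have "AE x in M. x\<^sup>2 = 0" by eventually_elim auto
  then have "(\<integral>x. x\<^sup>2 \<partial>M) = 0" by (simp add: integral_eq_zero_AE)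
  then show False using second_moment by simp
qed

lemma mgf_unbounded: "\<exists>B. \<forall>t\<ge>B. T \<le> mgf t"
proof -
  obtain a where a: "a > 0" "measure M {a<..} > 0" using tail_pos_right[OF tail_0_pos] by auto
  define B where "B = max 0 (ln (max T 1 / measure M {a<..}) / a)"
  have "T \<le> mgf t" if t: "t \<ge> B" for t
  proof -
    have "ln (max T 1 / measure M {a<..}) \<le> t * a" using t a unfolding B_def by (simp add: pos_divide_le_eq)
    moreover have "0 < max T 1 / measure M {a<..}" using a by simp
    ultimately have "max T 1 / measure M {a<..} \<le> exp (t * a)" by (metis exp_le_cancel_iff exp_ln)
    then have "T \<le> exp (t * a) * measure M {a<..}" using a by (simp add: pos_divide_le_eq)
    also have "\<dots> \<le> mgf t" using t unfolding B_def by (intro exp_mult_tail_le_mgf) simp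
    finally show ?thesis .
  qed
  then show ?thesis by blast
qed

lemma cdf_first_one:
  assumes "cdf M a0 = 1"
  shows "\<exists>w. cdf M w = 1 \<and> (\<forall>a<w. cdf M a < 1)"
proof -
  define T where "T = {a. cdf M a = 1}"
  obtain b where b: "\<And>a. a \<le> b \<Longrightarrow> cdf M a < 1"
    using order_tendstoD(2)[OF cdf_lim_at_bot, of 1] unfolding eventually_at_bot_linorder by auto
  have "b \<le> a" if "a \<in> T" for a
  proof (rule ccontr)
    assume "\<not> b \<le> a"
    then have "cdf M a < 1" using b by simp
    then show False using that unfolding T_def by simp
  qed
  then have T: "a0 \<in> T" "bdd_below T" using assms unfolding T_def by (auto intro: bdd_belowI[of _ b])
  define w where "w = Inf T"
  have one_right: "cdf M a = 1" if a: "a > w" for a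
  proof -
    obtain t where "t \<in> T" "t < a" using cInf_lessD[of T a] T a unfolding w_def by blast
    then show ?thesis using cdf_nondecreasing[of t a] cdf_bounded_prob[of a] unfolding T_def by simp
  qed
  have "(cdf M \<longlongrightarrow> 1) (at_right w)"
    by (rule tendsto_eventually) (auto simp: eventually_at_right_field one_right intro: exI[of _ "w + 1"])
  then have "cdf M w = 1"
    using cdf_is_right_cont[of w] by (simp add: continuous_within tendsto_unique[OF trivial_limit_at_right_real])
  moreover have "cdf M a < 1" if "a < w" for a
    using that cInf_lower[OF _ T(2), of a] cdf_bounded_prob[of a] unfolding T_def w_def
    by (auto simp: order.strict_iff_order)
  ultimately show ?thesis by blast
qed

lemma msupport_Sup_eq:
  assumes "cdf M w = 1" and "\<And>a. a < w \<Longrightarrow> cdf M a < 1"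
  shows "bdd_above (msupport M) \<and> Sup (msupport M) = w"
proof -
  have "w \<in> msupport M" unfolding msupport_def
  proof (intro CollectI allI impI)
    fix e :: real assume "e > 0"
    then have "0 < cdf M w - cdf M (w - e / 2)" using assms by simp
    also have "\<dots> = measure M {w - e / 2<..w}" using \<open>e > 0\<close> by (intro cdf_diff_eq) simp
    also have "\<dots> \<le> measure M (ball w e)"
      using \<open>e > 0\<close> by (intro finite_measure_mono) (auto simp: dist_real_def)
    finally show "emeasure M (ball w e) > 0" by (simp add: emeasure_eq_measure)
  qed
  moreover have "x \<le> w" if "x \<in> msupport M" for x
  proof (rule ccontr)
    assume "\<not> x \<le> w"
    then have "emeasure M (ball x (x - w)) \<le> emeasure M {w<..}"
      by (intro emeasure_mono) (auto simp: dist_real_def)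
    also have "\<dots> = 0" using assms(1) by (simp add: emeasure_eq_measure measure_greaterThan)
    moreover have "emeasure M (ball x (x - w)) > 0"
      using that \<open>\<not> x \<le> w\<close> unfolding msupport_def by auto
    ultimately show False by simp
  qed
  ultimately show ?thesis by (metis bdd_aboveI cSup_eq_maximum)
qed

text \<open>Either the tail never vanishes, or it vanishes exactly from the top \<open>w\<close> of the support on;
  then the absence of an atom at \<open>w\<close> makes the cdf left-continuous at \<open>w\<close>.\<close>

lemma tail_small_pos:
  assumes no_atom: "bdd_above (msupport M) \<Longrightarrow> measure M {Sup (msupport M)} = 0"
    and "\<delta> > 0"
  shows "\<exists>a. 0 < measure M {a<..} \<and> measure M {a<..} \<le> \<delta>"
proof (cases "\<forall>a. cdf M a < 1")
  case True
  obtain a where "1 - \<delta> < cdf M a"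
    using order_tendstoD(1)[OF cdf_lim_at_top_prob, of "1 - \<delta>"] \<open>\<delta> > 0\<close>
    unfolding eventually_at_top_linorder by auto
  then show ?thesis using True by (intro exI[of _ a]) (auto simp: measure_greaterThan)
next
  case False
  then obtain a0 where "cdf M a0 = 1" using cdf_bounded_prob by (meson not_less antisym)
  then obtain w where w: "cdf M w = 1" "\<And>a. a < w \<Longrightarrow> cdf M a < 1"
    using cdf_first_one by blast
  then have "measure M {w} = 0" using msupport_Sup_eq no_atom by simp
  then have "(cdf M \<longlongrightarrow> 1) (at_left w)"
    using w(1) isCont_cdf[of w] by (simp add: isCont_def filterlim_at_split)
  then have "\<forall>\<^sub>F a in at_left w. 1 - \<delta> < cdf M a"
    using \<open>\<delta> > 0\<close> by (intro order_tendstoD(1)) auto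
  then obtain b where "b < w" "\<And>a. b < a \<Longrightarrow> a < w \<Longrightarrow> 1 - \<delta> < cdf M a"
    unfolding eventually_at_left_field by blast
  then have "1 - \<delta> < cdf M ((b + w) / 2)" by simp
  then show ?thesis using w(2)[of "(b + w) / 2"] \<open>b < w\<close>
    by (intro exI[of _ "(b + w) / 2"]) (auto simp: measure_greaterThan)
qed

text \<open>Split at a: below a the integrand is at most e^(\<gamma>\<beta>a); above a apply
  z^\<gamma> \<le> \<eta> z + C to z = e^(\<beta>y)/M(\<beta>).\<close>

lemma mgf_frac_le:
  assumes \<gamma>: "0 < \<gamma>" "\<gamma> < 1" and \<eta>: "\<eta> > 0" and \<beta>: "\<beta> \<ge> 0"
  shows "mgf (\<gamma> * \<beta>)
    \<le> exp (\<gamma> * \<beta> * a) + (\<eta> + \<eta> powr (- \<gamma> / (1 - \<gamma>)) * measure M {a<..}) * mgf \<beta> powr \<gamma>"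
proof -
  define Mb C where "Mb = mgf \<beta>" and "C = \<eta> powr (- \<gamma> / (1 - \<gamma>))"
  have Mb: "Mb > 0" unfolding Mb_def by (rule mgf_pos)
  define f where "f y = exp (\<gamma> * \<beta> * a) + (\<eta> * Mb powr \<gamma> / Mb) * exp (\<beta> * y)
      + (C * Mb powr \<gamma>) * indicator {a<..} y" for y
  have f: "exp (\<gamma> * \<beta> * y) \<le> f y" for y
  proof (cases "y \<le> a")
    case True
    then have "exp (\<gamma> * \<beta> * y) \<le> exp (\<gamma> * \<beta> * a)" using \<gamma> \<beta> by (simp add: mult_left_mono)
    then show ?thesis unfolding f_def C_def using Mb \<eta> by (intro add_increasing2) auto
  next
    case False
    define z where "z = exp (\<beta> * y) / Mb"
    have z: "z \<ge> 0" unfolding z_def using Mb by simp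
    have "exp (\<gamma> * \<beta> * y) = (Mb * z) powr \<gamma>" unfolding z_def using Mb by (simp add: powr_def mult_ac)
    also have "\<dots> = Mb powr \<gamma> * z powr \<gamma>" using Mb z by (simp add: powr_mult)
    also have "\<dots> \<le> Mb powr \<gamma> * (\<eta> * z + C)"
      unfolding C_def using powr_le_linear_plus_const[OF \<gamma> \<eta> z] by (intro mult_left_mono) auto
    also have "\<dots> \<le> f y" unfolding f_def z_def using False by (simp add: field_simps)
    finally show ?thesis .
  qed
  have "mgf (\<gamma> * \<beta>) \<le> (\<integral>y. f y \<partial>M)" unfolding mgf_def
    using f unfolding f_def
    by (intro integral_mono) (auto intro!: Bochner_Integration.integrable_add integrable_real_indicator
        integrable_exp simp: less_top[symmetric])
  also have "(\<integral>y. f y \<partial>M) = exp (\<gamma> * \<beta> * a) + \<eta> * Mb powr \<gamma> + C * Mb powr \<gamma> * measure M {a<..}"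
    unfolding f_def using Mb integrable_exp prob_space
    by (simp add: Bochner_Integration.integral_add integrable_real_indicator less_top[symmetric] Mb_def mgf_def)
  finally show ?thesis unfolding Mb_def C_def by (simp add: algebra_simps)
qed

lemma exp_le_mgf_powr_eventually:
  assumes \<gamma>: "\<gamma> > 0" and \<eta>: "\<eta> > 0" and a': "a < a'" "measure M {a'<..} > 0"
  shows "\<exists>B. \<forall>\<beta>\<ge>B. exp (\<gamma> * \<beta> * a) \<le> \<eta> * mgf \<beta> powr \<gamma>"
proof -
  define q where "q = \<eta> powr (1 / \<gamma>) * measure M {a'<..}"
  have q: "q > 0" unfolding q_def using \<eta> a' by simp
  have "exp (\<gamma> * \<beta> * a) \<le> \<eta> * mgf \<beta> powr \<gamma>" if \<beta>: "\<beta> \<ge> max 0 (- ln q / (a' - a))" for \<beta>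
  proof -
    have "(- ln q) / (a' - a) \<le> \<beta>" using \<beta> by (simp only: max.bounded_iff)
    then have "- ln q \<le> \<beta> * (a' - a)" using a' by (simp only: pos_divide_le_eq diff_gt_0_iff_gt)
    then have "exp (- (\<beta> * (a' - a))) \<le> q" using q by (metis exp_le_cancel_iff exp_ln minus_le_iff)
    have "exp (\<beta> * a) = exp (- (\<beta> * (a' - a))) * exp (\<beta> * a')"
      by (simp add: exp_add[symmetric] algebra_simps)
    also have "\<dots> \<le> q * exp (\<beta> * a')"
      using \<open>exp (- (\<beta> * (a' - a))) \<le> q\<close> by (intro mult_right_mono) auto
    also have "\<dots> \<le> \<eta> powr (1 / \<gamma>) * mgf \<beta>"
      unfolding q_def using exp_mult_tail_le_mgf[of \<beta> a'] \<beta> \<eta> by (simp add: mult.assoc mult.commute[of "measure M _"] mult_left_mono)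
    finally have "exp (\<beta> * a) powr \<gamma> \<le> (\<eta> powr (1 / \<gamma>) * mgf \<beta>) powr \<gamma>" using \<gamma> by (intro powr_mono2) auto
    also have "\<dots> = \<eta> * mgf \<beta> powr \<gamma>" using \<eta> \<gamma> mgf_pos[of \<beta>] by (simp add: powr_mult powr_powr)
    also have "exp (\<beta> * a) powr \<gamma> = exp (\<gamma> * \<beta> * a)" by (simp add: powr_def mult_ac)
    finally show ?thesis .
  qed
  then show ?thesis by blast
qed

lemma mgf_ratio_small:
  assumes no_atom: "bdd_above (msupport M) \<Longrightarrow> measure M {Sup (msupport M)} = 0"
    and \<gamma>: "0 < \<gamma>" "\<gamma> < 1" and c: "c > 0"
  shows "\<exists>B. \<forall>\<beta>\<ge>B. mgf (\<gamma> * \<beta>) \<le> c * mgf \<beta> powr \<gamma>"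
proof -
  define \<eta> C where "\<eta> = c / 3" and "C = (c / 3) powr (- \<gamma> / (1 - \<gamma>))"
  have \<eta>: "\<eta> > 0" and C: "C > 0" unfolding \<eta>_def C_def using c by auto
  obtain a where a: "0 < measure M {a<..}" "measure M {a<..} \<le> \<eta> / C"
    using tail_small_pos[OF no_atom, of "\<eta> / C"] \<eta> C by auto
  obtain a' where a': "a < a'" "measure M {a'<..} > 0" using tail_pos_right[OF a(1)] by auto
  obtain B where B: "\<And>\<beta>. \<beta> \<ge> B \<Longrightarrow> exp (\<gamma> * \<beta> * a) \<le> \<eta> * mgf \<beta> powr \<gamma>"
    using exp_le_mgf_powr_eventually[OF \<gamma>(1) \<eta> a'] by auto
  have "mgf (\<gamma> * \<beta>) \<le> c * mgf \<beta> powr \<gamma>" if \<beta>: "\<beta> \<ge> max B 0" for \<beta>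
  proof -
    have "C * measure M {a<..} \<le> \<eta>" using a(2) C by (simp add: field_simps)
    then have "(\<eta> + C * measure M {a<..}) * mgf \<beta> powr \<gamma> \<le> 2 * \<eta> * mgf \<beta> powr \<gamma>"
      by (intro mult_right_mono) auto
    moreover have "mgf (\<gamma> * \<beta>) \<le> exp (\<gamma> * \<beta> * a) + (\<eta> + C * measure M {a<..}) * mgf \<beta> powr \<gamma>"
      using mgf_frac_le[OF \<gamma> \<eta>, of \<beta> a] \<beta> unfolding C_def \<eta>_def by simp
    ultimately show ?thesis using B[of \<beta>] \<beta> unfolding \<eta>_def by simp
  qed
  then show ?thesis by blast
qed

lemma borel_measurable_M_iff: "f \<in> borel_measurable M \<longleftrightarrow> f \<in> borel_measurable borel"
  by (simp add: measurable_cong_sets[OF events_eq_borel refl])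

subsection \<open>The i.i.d. environment\<close>

sublocale env: prob_space "env M"
  unfolding env_def by (intro prob_space_PiM prob_space_axioms)

lemma measurable_env_coordinate [measurable]: "(\<lambda>\<omega>. \<omega> i) \<in> measurable (env M) M"
  unfolding env_def by (rule measurable_component_singleton) simp

lemma borel_measurable_env_coordinate: "(\<lambda>\<omega>. \<omega> i) \<in> borel_measurable (env M)"
  using measurable_env_coordinate[of i] by (simp add: measurable_cong_sets[OF refl events_eq_borel])

lemma distr_env_coordinate: "distr (env M) M (\<lambda>\<omega>. \<omega> i) = M"
  unfolding env_def by (rule distr_PiM_component) (auto intro: prob_space_axioms)

lemma integrable_env_coordinate:
  "integrable M (g :: real \<Rightarrow> real) \<Longrightarrow> integrable (env M) (\<lambda>\<omega>. g (\<omega> i))"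
  using integrable_distr_eq[of "\<lambda>\<omega>. \<omega> i" "env M" M g] by (simp add: distr_env_coordinate)

lemma integral_env_coordinate:
  "(g :: real \<Rightarrow> real) \<in> borel_measurable M \<Longrightarrow> (\<integral>\<omega>. g (\<omega> i) \<partial>env M) = (\<integral>x. g x \<partial>M)"
  using integral_distr[of "\<lambda>\<omega>. \<omega> i" "env M" M g] by (simp add: distr_env_coordinate)

lemma indep_vars_env_coordinates: "env.indep_vars (\<lambda>_. M) (\<lambda>i \<omega>. \<omega> i) UNIV"
proof -
  have "(\<lambda>\<omega>. \<lambda>i\<in>UNIV. \<omega> i) = (\<lambda>\<omega> :: nat \<Rightarrow> real. \<omega>)" by (simp add: restrict_def)
  then have "distr (env M) (PiM UNIV (\<lambda>_. M)) (\<lambda>\<omega>. \<lambda>i\<in>UNIV. \<omega> i) = env M"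
    by (simp add: env_def distr_id)
  then have "distr (env M) (PiM UNIV (\<lambda>_. M)) (\<lambda>\<omega>. \<lambda>i\<in>UNIV. \<omega> i) = PiM UNIV (\<lambda>i. distr (env M) M (\<lambda>\<omega>. \<omega> i))"
    using distr_env_coordinate by (simp add: env_def)
  then show ?thesis by (subst env.indep_vars_iff_distr_eq_PiM') auto
qed

lemma indep_var_env_prefix_coordinate:
  fixes G :: "(nat \<Rightarrow> real) \<Rightarrow> real" and g :: "real \<Rightarrow> real"
  assumes G: "G \<in> borel_measurable (PiM {..<n} (\<lambda>_. M))" and g: "g \<in> borel_measurable M"
  shows "env.indep_var borel (\<lambda>\<omega>. G (restrict \<omega> {..<n})) borel (\<lambda>\<omega>. g (\<omega> n))"
proof -
  define I where "I b = (if b then {..<n} else {n})" for b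
  define Y where "Y b = (if b then G else (\<lambda>\<omega>. g (\<omega> n)))" for b
  have "env.indep_vars (\<lambda>b. PiM (I b) (\<lambda>_. M)) (\<lambda>b \<omega>. restrict (\<lambda>i. \<omega> i) (I b)) UNIV"
    by (rule env.indep_vars_restrict[OF indep_vars_env_coordinates]) (auto simp: I_def disjoint_family_on_def)
  then have "env.indep_vars (\<lambda>b. PiM (I b) (\<lambda>_. M)) (\<lambda>b \<omega>. restrict \<omega> (I b)) UNIV" by simp
  moreover have "Y b \<in> borel_measurable (PiM (I b) (\<lambda>_. M))" for b
    using G g measurable_component_singleton[of n "{n}" "\<lambda>_. M"] by (auto simp: Y_def I_def)
  ultimately have indep: "env.indep_vars (\<lambda>_. borel) (\<lambda>b \<omega>. Y b (restrict \<omega> (I b))) UNIV"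
    by (rule env.indep_vars_compose2)
  have vars: "(\<lambda>b \<omega>. Y b (restrict \<omega> (I b)))
      = case_bool (\<lambda>\<omega>. G (restrict \<omega> {..<n})) (\<lambda>\<omega>. g (\<omega> n))"
    by (auto simp: fun_eq_iff Y_def I_def split: bool.split)
  have borel: "case_bool borel borel = (\<lambda>_::bool. borel :: real measure)"
    by (auto simp: fun_eq_iff split: bool.split)
  show ?thesis unfolding env.indep_var_def borel using indep unfolding vars .
qed

lemma indep_var_renewal_pf_coordinate:
  fixes f G g :: "real \<Rightarrow> real"
  assumes "f \<in> borel_measurable borel" "G \<in> borel_measurable borel" "g \<in> borel_measurable M"
  shows "env.indep_var borel (\<lambda>\<omega>. G (renewal_pf K (\<lambda>m. f (\<omega> m)) n)) borel (\<lambda>\<omega>. g (\<omega> n))"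
proof -
  have "(\<lambda>\<omega>. G (renewal_pf K (\<lambda>m. f (\<omega> m)) n)) \<in> borel_measurable (PiM {..<n} (\<lambda>_. M))"
    using assms(1,2) measurable_component_singleton[of _ "{..<n}" "\<lambda>_. M"] by measurable
  from indep_var_env_prefix_coordinate[OF this assms(3)] show ?thesis
    by (simp only: renewal_pf_cong[of n "\<lambda>m. f (restrict _ {..<n} m)" "\<lambda>m. f (_ m)"] restrict_apply' lessThan_iff)
qed

lemma expectation_renewal_pf:
  fixes f :: "real \<Rightarrow> real"
  assumes f: "integrable M f"
  shows "integrable (env M) (\<lambda>\<omega>. renewal_pf K (\<lambda>m. f (\<omega> m)) n)
    \<and> (\<integral>\<omega>. renewal_pf K (\<lambda>m. f (\<omega> m)) n \<partial>env M) = renewal_pf K (\<lambda>_. \<integral>x. f x \<partial>M) n"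
proof (induction n rule: less_induct)
  case (less n)
  let ?R = "\<lambda>\<omega> m. renewal_pf K (\<lambda>m. f (\<omega> m)) m"
  show ?case
  proof (cases n)
    case (Suc k)
    have f_meas: "f \<in> borel_measurable borel" using f borel_measurable_M_iff by auto
    have summand: "integrable (env M) (\<lambda>\<omega>. ?R \<omega> m * (K (Suc k - m) * f (\<omega> m)))
      \<and> (\<integral>\<omega>. ?R \<omega> m * (K (Suc k - m) * f (\<omega> m)) \<partial>env M)
        = renewal_pf K (\<lambda>_. \<integral>x. f x \<partial>M) m * K (Suc k - m) * (\<integral>x. f x \<partial>M)"
      if m: "m < Suc k" for m
    proof -
      have ind: "env.indep_var borel (\<lambda>\<omega>. ?R \<omega> m) borel (\<lambda>\<omega>. K (Suc k - m) * f (\<omega> m))"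
        using indep_var_renewal_pf_coordinate[OF f_meas, of "\<lambda>x. x" "\<lambda>y. K (Suc k - m) * f y"] f_meas
        by (simp add: borel_measurable_M_iff)
      have int1: "integrable (env M) (\<lambda>\<omega>. ?R \<omega> m)" using less m Suc by simp
      have int2: "integrable (env M) (\<lambda>\<omega>. K (Suc k - m) * f (\<omega> m))"
        using integrable_env_coordinate[of "\<lambda>y. K (Suc k - m) * f y"] f by simp
      have "(\<integral>\<omega>. f (\<omega> m) \<partial>env M) = (\<integral>x. f x \<partial>M)"
        using integral_env_coordinate[of f m] f by auto
      then show ?thesis using env.indep_var_lebesgue_integral[OF ind int1 int2]
          env.indep_var_integrable[OF ind int1 int2] less m Suc by (simp add: mult_ac)
    qed
    have R_eq: "?R \<omega> n = (\<Sum>m<Suc k. ?R \<omega> m * (K (Suc k - m) * f (\<omega> m)))" for \<omega>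
      unfolding Suc by (simp add: mult.assoc)
    have "integrable (env M) (\<lambda>\<omega>. ?R \<omega> n)"
      unfolding R_eq using summand by (intro Bochner_Integration.integrable_sum) auto
    moreover have "(\<integral>\<omega>. ?R \<omega> n \<partial>env M) = renewal_pf K (\<lambda>_. \<integral>x. f x \<partial>M) n"
      unfolding R_eq using summand by (subst Bochner_Integration.integral_sum) (auto simp: Suc)
    ultimately show ?thesis ..
  qed (simp add: env.prob_space)
qed

lemma frac_moment_renewal_pf:
  fixes f :: "real \<Rightarrow> real"
  assumes K: "\<And>n. K n \<ge> 0" and f: "\<And>x. f x \<ge> 0" "integrable M f" and \<gamma>: "0 < \<gamma>" "\<gamma> \<le> 1"
    and summable: "\<And>N. (\<Sum>m<N. K (N - m) powr \<gamma>) * (\<integral>x. f x powr \<gamma> \<partial>M) \<le> 1"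
  shows "integrable (env M) (\<lambda>\<omega>. renewal_pf K (\<lambda>m. f (\<omega> m)) n powr \<gamma>)
    \<and> (\<integral>\<omega>. renewal_pf K (\<lambda>m. f (\<omega> m)) n powr \<gamma> \<partial>env M) \<le> 1"
proof (induction n rule: less_induct)
  case (less n)
  let ?R = "\<lambda>\<omega> m. renewal_pf K (\<lambda>m. f (\<omega> m)) m"
  have f_meas: "f \<in> borel_measurable borel" using f borel_measurable_M_iff by auto
  have R_nonneg: "?R \<omega> m \<ge> 0" for \<omega> m by (rule renewal_pf_nonneg[OF K f(1)])
  have int_powr: "integrable (env M) (\<lambda>\<omega>. ?R \<omega> m powr \<gamma>)" for m
    using env.integrable_powr_of_nonneg[OF conjunct1[OF expectation_renewal_pf[OF f(2)]] R_nonneg \<gamma>] .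
  have f_powr: "integrable M (\<lambda>x. f x powr \<gamma>)" by (rule integrable_powr_of_nonneg[OF f(2,1) \<gamma>])
  show ?case
  proof (cases n)
    case (Suc k)
    define G where "G m y = K (Suc k - m) powr \<gamma> * f y powr \<gamma>" for m y
    have pointwise: "?R \<omega> n powr \<gamma> \<le> (\<Sum>m<Suc k. ?R \<omega> m powr \<gamma> * G m (\<omega> m))" for \<omega>
    proof -
      have "?R \<omega> n powr \<gamma> \<le> (\<Sum>m<Suc k. (?R \<omega> m * K (Suc k - m) * f (\<omega> m)) powr \<gamma>)"
        unfolding Suc renewal_pf.simps using \<gamma> R_nonneg K f by (intro powr_sum_le_sum_powr) auto
      also have "\<dots> = (\<Sum>m<Suc k. ?R \<omega> m powr \<gamma> * G m (\<omega> m))"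
        unfolding G_def using R_nonneg K f by (intro sum.cong refl) (simp add: powr_mult mult_ac)
      finally show ?thesis .
    qed
    have summand: "integrable (env M) (\<lambda>\<omega>. ?R \<omega> m powr \<gamma> * G m (\<omega> m))
      \<and> (\<integral>\<omega>. ?R \<omega> m powr \<gamma> * G m (\<omega> m) \<partial>env M) \<le> K (Suc k - m) powr \<gamma> * (\<integral>x. f x powr \<gamma> \<partial>M)"
      if m: "m < Suc k" for m
    proof -
      have G_int: "integrable M (G m)" unfolding G_def using f_powr by simp
      then have G_meas: "G m \<in> borel_measurable M" by auto
      have ind: "env.indep_var borel (\<lambda>\<omega>. ?R \<omega> m powr \<gamma>) borel (\<lambda>\<omega>. G m (\<omega> m))"
        using indep_var_renewal_pf_coordinate[OF f_meas _ G_meas, of "\<lambda>x. x powr \<gamma>"] by simp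
      have int2: "integrable (env M) (\<lambda>\<omega>. G m (\<omega> m))" by (rule integrable_env_coordinate[OF G_int])
      have "(\<integral>\<omega>. G m (\<omega> m) \<partial>env M) = K (Suc k - m) powr \<gamma> * (\<integral>x. f x powr \<gamma> \<partial>M)"
        using integral_env_coordinate[OF G_meas] unfolding G_def by simp
      moreover have "(\<integral>\<omega>. ?R \<omega> m powr \<gamma> \<partial>env M) \<le> 1" using less m Suc by simp
      moreover have "0 \<le> K (Suc k - m) powr \<gamma> * (\<integral>x. f x powr \<gamma> \<partial>M)" by simp
      ultimately show ?thesis
        using env.indep_var_lebesgue_integral[OF ind int_powr int2] env.indep_var_integrable[OF ind int_powr int2]
        by (simp add: mult_left_le_one_le)
    qed
    have "(\<integral>\<omega>. ?R \<omega> n powr \<gamma> \<partial>env M) \<le> (\<integral>\<omega>. (\<Sum>m<Suc k. ?R \<omega> m powr \<gamma> * G m (\<omega> m)) \<partial>env M)"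
      using summand pointwise int_powr by (intro integral_mono Bochner_Integration.integrable_sum) auto
    also have "\<dots> = (\<Sum>m<Suc k. (\<integral>\<omega>. ?R \<omega> m powr \<gamma> * G m (\<omega> m) \<partial>env M))"
      using summand by (intro Bochner_Integration.integral_sum) auto
    also have "\<dots> \<le> (\<Sum>m<Suc k. K (Suc k - m) powr \<gamma>) * (\<integral>x. f x powr \<gamma> \<partial>M)"
      unfolding sum_distrib_right using summand by (intro sum_mono) auto
    also have "\<dots> \<le> 1" by (rule summable)
    finally show ?thesis using int_powr by simp
  qed (simp add: env.prob_space)
qed

lemma f_que_eqI:
  assumes "AE \<omega> in env M. (\<lambda>n. ln (Zpin K \<beta> h \<omega> n) / real n) \<longlonglongrightarrow> F"
  shows "f_que K M \<beta> h = F"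
  unfolding f_que_def
proof (rule the_equality)
  fix F' assume "AE \<omega> in env M. (\<lambda>n. ln (Zpin K \<beta> h \<omega> n) / real n) \<longlonglongrightarrow> F'"
  with assms have "AE \<omega> in env M. F' = F" by eventually_elim (rule LIMSEQ_unique)
  then show "F' = F" by simp
qed (fact assms)

lemma f_ann_eq_lim:
  "f_ann K M \<beta> h = lim (\<lambda>n. ln (renewal_pf K (\<lambda>_. mgf \<beta> * exp (- h)) n) / real n)"
proof -
  have f: "integrable M (\<lambda>y. exp (\<beta> * y - h))"
    using integrable_exp[of \<beta>] by (simp add: exp_diff)
  have "(\<integral>y. exp (\<beta> * y - h) \<partial>M) = mgf \<beta> * exp (- h)"
    by (simp add: mgf_def exp_diff exp_minus field_simps)
  then have "(\<integral>\<omega>. Zpin K \<beta> h \<omega> n \<partial>env M) = renewal_pf K (\<lambda>_. mgf \<beta> * exp (- h)) n" if "n \<ge> 1" for n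
    using expectation_renewal_pf[OF f, of K n] that by (simp add: Zpin_eq_renewal_pf)
  then have "ln (\<integral>\<omega>. Zpin K \<beta> h \<omega> n \<partial>env M) / real n
      = ln (renewal_pf K (\<lambda>_. mgf \<beta> * exp (- h)) n) / real n" for n
    by (cases "n = 0") auto
  then show ?thesis unfolding f_ann_def by presburger
qed

lemma f_que_eq_0:
  assumes K: "\<And>n. K n \<ge> 0" and K_pos: "\<forall>\<^sub>F n in sequentially. K n > 0"
    and lnK: "(\<lambda>n. ln (K n) / real n) \<longlonglongrightarrow> 0" and \<gamma>: "0 < \<gamma>" "\<gamma> \<le> 1"
    and summable: "\<And>N. (\<Sum>m<N. K (N - m) powr \<gamma>) * (exp (- (\<gamma> * h)) * mgf (\<gamma> * \<beta>)) \<le> 1"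
  shows "f_que K M \<beta> h = 0"
proof -
  define f where "f y = exp (\<beta> * y - h)" for y
  let ?R = "\<lambda>\<omega>. renewal_pf K (\<lambda>m. f (\<omega> m))"
  have f_int: "integrable M f" unfolding f_def using integrable_exp[of \<beta>] by (simp add: exp_diff)
  have "f x powr \<gamma> = exp (- (\<gamma> * h)) * exp ((\<gamma> * \<beta>) * x)" for x
    unfolding f_def by (simp add: powr_def exp_add[symmetric] algebra_simps)
  then have "(\<integral>x. f x powr \<gamma> \<partial>M) = exp (- (\<gamma> * h)) * mgf (\<gamma> * \<beta>)"
    by (simp add: mgf_def)
  then have moment: "integrable (env M) (\<lambda>\<omega>. ?R \<omega> n powr \<gamma>)" "(\<integral>\<omega>. ?R \<omega> n powr \<gamma> \<partial>env M) \<le> 1" for n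
    using frac_moment_renewal_pf[OF K _ f_int \<gamma>, where n=n] summable by (auto simp: f_def)
  have meas: "(\<lambda>\<omega>. ?R \<omega> n) \<in> borel_measurable (env M)" for n
    unfolding f_def using borel_measurable_env_coordinate by measurable
  have "AE \<omega> in env M. \<forall>\<delta>>0. \<forall>\<^sub>F n in sequentially. ?R \<omega> n < exp (\<delta> * real n)"
    by (rule env.AE_subexponential_of_frac_moment[where X="\<lambda>n \<omega>. ?R \<omega> n", OF meas \<gamma>(1) moment])
  then have "AE \<omega> in env M. (\<lambda>n. ln (Zpin K \<beta> h \<omega> n) / real n) \<longlonglongrightarrow> 0"
  proof eventually_elim
    case (elim \<omega>)
    have "(\<lambda>n. ln (?R \<omega> n) / real n) \<longlonglongrightarrow> 0"
    proof (rule ln_over_n_tendsto_0_squeeze)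
      show "(\<lambda>n. ln (f (\<omega> 0) * K n) / real n) \<longlonglongrightarrow> 0"
        using ln_mult_over_n_tendsto_0[OF _ K_pos lnK] by (simp add: f_def)
      show "\<forall>\<^sub>F n in sequentially. 0 < f (\<omega> 0) * K n \<and> f (\<omega> 0) * K n \<le> ?R \<omega> n"
        using K_pos eventually_ge_at_top[of 1]
        by eventually_elim (use renewal_pf_ge_first[of K "\<lambda>m. f (\<omega> m)"] K in \<open>auto simp: f_def mult.commute\<close>)
    next
      show "\<forall>\<^sub>F n in sequentially. ?R \<omega> n < exp (\<delta> * real n)" if "\<delta> > 0" for \<delta>
        using elim that by blast
    qed
    moreover have "\<forall>\<^sub>F n in sequentially. ln (?R \<omega> n) / real n = ln (Zpin K \<beta> h \<omega> n) / real n"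
      using eventually_ge_at_top[of 1] by eventually_elim (simp add: Zpin_eq_renewal_pf f_def)
    ultimately show ?case by (rule Lim_transform_eventually)
  qed
  then show ?thesis by (rule f_que_eqI)
qed

end

section \<open>Critical points\<close>

text \<open>The infimum of a set of reals that is not bounded below is the unspecified value
  \<open>- (LEAST z. False)\<close>; this bound covers both cases.\<close>

lemma Inf_le_max_junk:
  fixes X :: "real set"
  assumes "x \<in> X"
  shows "Inf X \<le> max x (- (LEAST z::real. False))"
proof (cases "bdd_below X")
  case True then show ?thesis using assms cInf_lower[of x X] by simp
next
  case False
  have "\<not> (\<forall>y\<in>uminus ` X. y \<le> z)" for z :: real
  proof
    assume "\<forall>y\<in>uminus ` X. y \<le> z"
    then have "bdd_below X" by (intro bdd_belowI[of X "- z"]) (simp add: minus_le_iff)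
    then show False using False by simp
  qed
  then have no_upper_bound: "(\<lambda>z. \<forall>y\<in>uminus ` X. y \<le> z) = (\<lambda>z::real. False)" by (intro ext) blast
  show ?thesis unfolding Inf_real_def Sup_real_def no_upper_bound by simp
qed

locale pinning_model = disorder_law M for M :: "real measure" +
  fixes K :: "nat \<Rightarrow> real" and \<alpha> :: real
  assumes K_nonneg: "\<And>n. K n \<ge> 0" and K_sums: "K sums 1"
    and K_tail: "(\<lambda>n. ln (K n) / ln (real n)) \<longlonglongrightarrow> - (1 + \<alpha>)" and alpha_pos: "\<alpha> > 0"
begin

lemma K_summable: "summable K" and K_suminf: "suminf K = 1"
  using K_sums by (auto simp: sums_iff)

lemma K_eventually_pos: "\<forall>\<^sub>F n in sequentially. K n > 0"
  using eventually_pos_of_tail[OF K_nonneg K_tail] alpha_pos by simp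

lemma ln_K_over_n: "(\<lambda>n. ln (K n) / real n) \<longlonglongrightarrow> 0"
  by (rule ln_over_n_tendsto_0_of_tail[OF K_tail])

lemma f_ann_eq_0:
  assumes "mgf \<beta> * exp (- h) \<le> 1"
  shows "f_ann K M \<beta> h = 0"
  unfolding f_ann_eq_lim
  by (intro limI renewal_pf_const_rate_zero[OF K_nonneg K_summable _ K_eventually_pos ln_K_over_n])
    (use assms mgf_pos[of \<beta>] K_suminf in auto)

lemma f_ann_pos:
  assumes "n \<ge> 1" and "mgf \<beta> * exp (- h) * K n > 1"
  shows "f_ann K M \<beta> h > 0"
proof -
  obtain L where "L > 0" "(\<lambda>n. ln (renewal_pf K (\<lambda>_. mgf \<beta> * exp (- h)) n) / real n) \<longlonglongrightarrow> L"
    using renewal_pf_const_rate_pos[OF K_nonneg K_summable _ K_eventually_pos assms] K_suminf by auto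
  then show ?thesis unfolding f_ann_eq_lim by (simp add: limI)
qed

lemma hc_ann_ge:
  assumes "n \<ge> 1" and "exp (h + 1) \<le> K n * mgf \<beta>"
  shows "h + 1 \<le> hc_ann K M \<beta>"
  unfolding hc_ann_def
proof (rule cInf_greatest)
  have "mgf \<beta> * exp (- ln (mgf \<beta>)) = 1" using mgf_pos[of \<beta>] by (simp add: exp_minus)
  then show "{h. f_ann K M \<beta> h = 0} \<noteq> {}" using f_ann_eq_0[of \<beta> "ln (mgf \<beta>)"] by auto
next
  fix h' assume h': "h' \<in> {h. f_ann K M \<beta> h = 0}"
  show "h + 1 \<le> h'"
  proof (rule ccontr)
    assume "\<not> h + 1 \<le> h'"
    then have "exp h' < exp (h + 1)" by simp
    then have "exp h' < K n * mgf \<beta>" using assms(2) by linarith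
    then have "mgf \<beta> * exp (- h') * K n > 1" by (simp add: exp_minus field_simps)
    then show False using f_ann_pos[OF assms(1)] h' by fastforce
  qed
qed

lemma frac_exponent_exists: "\<exists>\<gamma>. 0 < \<gamma> \<and> \<gamma> < 1 \<and> \<gamma> * (1 + \<alpha>) > 1"
  using alpha_pos by (intro exI[of _ "(1 + 1 / (1 + \<alpha>)) / 2"]) (auto simp: field_simps intro!: add_pos_pos)

context
  fixes \<gamma> :: real
  assumes \<gamma>: "0 < \<gamma>" "\<gamma> < 1" "\<gamma> * (1 + \<alpha>) > 1"
begin

lemma summable_K_powr: "summable (\<lambda>n. K n powr \<gamma>)"
  by (rule summable_powr_of_tail[OF K_nonneg K_tail \<gamma>(1,3)])

lemma suminf_K_powr_pos: "(\<Sum>n. K n powr \<gamma>) > 0"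
proof -
  obtain n where "K n > 0" using K_eventually_pos unfolding eventually_sequentially by auto
  then have "0 < K n powr \<gamma>" by simp
  also have "\<dots> \<le> (\<Sum>n. K n powr \<gamma>)" using sum_le_suminf[OF summable_K_powr, of "{n}"] by simp
  finally show ?thesis .
qed

definition quenched_bound :: "real \<Rightarrow> real" where
  "quenched_bound \<beta> = ln ((\<Sum>n. K n powr \<gamma>) * mgf (\<gamma> * \<beta>)) / \<gamma>"

lemma f_que_quenched_bound: "f_que K M \<beta> (quenched_bound \<beta>) = 0"
proof (rule f_que_eq_0[OF K_nonneg K_eventually_pos ln_K_over_n \<gamma>(1) less_imp_le[OF \<gamma>(2)]])
  define S where "S = (\<Sum>n. K n powr \<gamma>)"
  have S: "S > 0" unfolding S_def by (rule suminf_K_powr_pos)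
  have "exp (- (\<gamma> * quenched_bound \<beta>)) * mgf (\<gamma> * \<beta>) = 1 / S"
    using S mgf_pos[of "\<gamma> * \<beta>"] \<gamma>(1) unfolding quenched_bound_def S_def[symmetric]
    by (simp add: exp_minus field_simps)
  moreover have "(\<Sum>m<N. K (N - m) powr \<gamma>) \<le> S" for N
    unfolding S_def using summable_K_powr by (intro sum_reflect_le_suminf) auto
  ultimately show "(\<Sum>m<N. K (N - m) powr \<gamma>) * (exp (- (\<gamma> * quenched_bound \<beta>)) * mgf (\<gamma> * \<beta>)) \<le> 1" for N
    using S by (simp add: divide_le_eq)
qed

lemma exp_quenched_bound_eventually_le:
  assumes no_atom: "bdd_above (msupport M) \<Longrightarrow> measure M {Sup (msupport M)} = 0"
    and n: "K n > 0"
  shows "\<exists>B. \<forall>\<beta>\<ge>B. exp (quenched_bound \<beta> + 1) \<le> K n * mgf \<beta>"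
proof -
  define S where "S = (\<Sum>n. K n powr \<gamma>)"
  have S: "S > 0" unfolding S_def by (rule suminf_K_powr_pos)
  obtain B where B: "\<And>\<beta>. \<beta> \<ge> B \<Longrightarrow> mgf (\<gamma> * \<beta>) \<le> (K n / exp 1) powr \<gamma> / S * mgf \<beta> powr \<gamma>"
    using mgf_ratio_small[OF no_atom \<gamma>(1,2), of "(K n / exp 1) powr \<gamma> / S"] S n by auto
  have "exp (quenched_bound \<beta> + 1) \<le> K n * mgf \<beta>" if "\<beta> \<ge> B" for \<beta>
  proof -
    have pos: "0 < S * mgf (\<gamma> * \<beta>)" "0 < K n * mgf \<beta> / exp 1" using S n mgf_pos by auto
    have "S * mgf (\<gamma> * \<beta>) \<le> (K n / exp 1) powr \<gamma> * mgf \<beta> powr \<gamma>"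
      using B[OF that] S by (simp add: field_simps)
    also have "\<dots> = (K n * mgf \<beta> / exp 1) powr \<gamma>"
      using n mgf_pos[of \<beta>] by (subst powr_mult[symmetric]) auto
    finally have "ln (S * mgf (\<gamma> * \<beta>)) \<le> ln ((K n * mgf \<beta> / exp 1) powr \<gamma>)"
      using pos by (subst ln_le_cancel_iff) auto
    also have "\<dots> = \<gamma> * (ln (K n * mgf \<beta>) - 1)" using pos n mgf_pos[of \<beta>] by (simp add: ln_powr ln_div)
    finally have "ln (S * mgf (\<gamma> * \<beta>)) / \<gamma> \<le> ln (K n * mgf \<beta>) - 1"
      using \<gamma>(1) by (simp add: pos_divide_le_eq mult.commute)
    then have "quenched_bound \<beta> + 1 \<le> ln (K n * mgf \<beta>)"
      unfolding quenched_bound_def S_def[symmetric] by simp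
    then have "exp (quenched_bound \<beta> + 1) \<le> exp (ln (K n * mgf \<beta>))" by simp
    also have "\<dots> = K n * mgf \<beta>" using n mgf_pos[of \<beta>] by simp
    finally show ?thesis .
  qed
  then show ?thesis by blast
qed

lemma quenched_bound_eventually_gt: "\<exists>B. \<forall>\<beta>\<ge>B. J < quenched_bound \<beta>"
proof -
  define S where "S = (\<Sum>n. K n powr \<gamma>)"
  have S: "S > 0" unfolding S_def by (rule suminf_K_powr_pos)
  obtain B where B: "\<And>t. t \<ge> B \<Longrightarrow> exp (\<gamma> * J) / S + 1 \<le> mgf t" using mgf_unbounded by blast
  have "J < quenched_bound \<beta>" if "\<beta> \<ge> B / \<gamma>" for \<beta>
  proof -
    have "exp (\<gamma> * J) / S < mgf (\<gamma> * \<beta>)" using B[of "\<gamma> * \<beta>"] that \<gamma>(1) by (simp add: field_simps)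
    then have "exp (\<gamma> * J) < S * mgf (\<gamma> * \<beta>)" using S by (simp add: field_simps)
    then have "ln (exp (\<gamma> * J)) < ln (S * mgf (\<gamma> * \<beta>))"
      using S mgf_pos[of "\<gamma> * \<beta>"] by (intro ln_less_cancel_iff[THEN iffD2]) auto
    then have "\<gamma> * J < ln (S * mgf (\<gamma> * \<beta>))" by simp
    then show ?thesis using \<gamma>(1) unfolding quenched_bound_def S_def[symmetric] by (simp add: field_simps)
  qed
  then show ?thesis by blast
qed

end

theorem bdd_above_disorder_irrelevant_set:
  assumes no_atom: "bdd_above (msupport M) \<Longrightarrow> measure M {Sup (msupport M)} = 0"
  shows "bdd_above (disorder_irrelevant_set K M)"
proof -
  obtain \<gamma> where \<gamma>: "0 < \<gamma>" "\<gamma> < 1" "\<gamma> * (1 + \<alpha>) > 1" using frac_exponent_exists by blast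
  obtain N where "\<And>n. n \<ge> N \<Longrightarrow> K n > 0" using K_eventually_pos unfolding eventually_sequentially by blast
  then have n: "Suc N \<ge> 1" "K (Suc N) > 0" by auto
  \<comment> \<open>the value of \<open>hc_que\<close> if the set of zeros of \<open>f_que\<close> is not bounded below\<close>
  define J :: real where "J = - (LEAST z::real. False)"
  obtain B1 where B1: "\<And>\<beta>. \<beta> \<ge> B1 \<Longrightarrow> exp (quenched_bound \<gamma> \<beta> + 1) \<le> K (Suc N) * mgf \<beta>"
    using exp_quenched_bound_eventually_le[OF \<gamma> no_atom n(2)] by blast
  obtain B2 where B2: "\<And>\<beta>. \<beta> \<ge> B2 \<Longrightarrow> J < quenched_bound \<gamma> \<beta>"
    using quenched_bound_eventually_gt[OF \<gamma>] by blast
  have "\<beta> \<le> max B1 B2" if "\<beta> \<in> disorder_irrelevant_set K M" for \<beta>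
  proof (rule ccontr)
    assume "\<not> \<beta> \<le> max B1 B2"
    have "hc_que K M \<beta> \<le> max (quenched_bound \<gamma> \<beta>) J"
      unfolding hc_que_def J_def using f_que_quenched_bound[OF \<gamma>] by (intro Inf_le_max_junk) simp
    also have "\<dots> < quenched_bound \<gamma> \<beta> + 1" using B2 \<open>\<not> \<beta> \<le> max B1 B2\<close> by simp
    also have "\<dots> \<le> hc_ann K M \<beta>" using hc_ann_ge[OF n(1) B1] \<open>\<not> \<beta> \<le> max B1 B2\<close> by simp
    finally show False using that unfolding disorder_irrelevant_set_def by simp
  qed
  then show ?thesis by (rule bdd_aboveI)
qed

end

theorem corollary1p7:
  fixes K :: "nat \<Rightarrow> real" and \<alpha> :: real and \<mu>0 :: "real measure"
  assumes K_nonneg: "\<And>n. K n \<ge> 0"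
    and K_zero: "K 0 = 0"
    and K_sum: "(\<lambda>n. K n) sums 1"
    and K_tail: "(\<lambda>n. ln (K n) / ln (real n)) \<longlonglongrightarrow> - (1 + \<alpha>)"
    and alpha_pos: "\<alpha> > 0"
    and mu_prob: "prob_space \<mu>0"
    and mu_sets: "sets \<mu>0 = sets borel"
    and mu_exp: "\<And>t. integrable \<mu>0 (\<lambda>x. exp (t * x))"
    and mu_mean: "(\<integral>x. x \<partial>\<mu>0) = 0"
    and mu_var: "(\<integral>x. x\<^sup>2 \<partial>\<mu>0) = 1"
    and no_atom_top: "bdd_above (msupport \<mu>0) \<Longrightarrow> measure \<mu>0 {Sup (msupport \<mu>0)} = 0"
  shows "bdd_above (disorder_irrelevant_set K \<mu>0)"
proof -
  have "real_distribution \<mu>0"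
    by (intro real_distribution.intro real_distribution_axioms.intro mu_prob mu_sets)
  moreover have "disorder_law_axioms \<mu>0"
    by (intro disorder_law_axioms.intro mu_exp mu_mean mu_var)
  moreover have "pinning_model_axioms K \<alpha>"
    using K_sum by (intro pinning_model_axioms.intro K_nonneg K_tail alpha_pos) simp
  ultimately interpret pinning_model \<mu>0 K \<alpha>
    by (intro pinning_model.intro disorder_law.intro)
  show ?thesis by (rule bdd_above_disorder_irrelevant_set[OF no_atom_top])
qed

end
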